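(* Let $s>0$, $x_0>0$, and let $P:[0,\infty)\to\mathbb{R}$ be a $\mathcal{C}^2$ increasing function with $P(0)=0$, $P(x)>0$ for $x>0$, satisfying $\int_{x_0}^{\infty}P(z)z^{-1-2/s}\,dz<\infty$. Consider the equation \[ \frac{d\gamma_1}{dx}=\frac{\gamma_1(x)+\gamma_1(x)^2-P(x)}{s\,x\,\gamma_1(x)},\qquad \gamma_1(x_0)=\gamma_0>0, \] and let $\gamma_1^{\star}$ be the separatrix (defined in the context). Then every global solution with $\gamma_1(x_0)>\gamma_1^{\star}(x_0)$ satisfies $C_1x^{1/s}\le\gamma_1(x)\le C_2x^{1/s}$ for all sufficiently large $x$, for some constants $0<C_1<C_2$, while the separatrix satisfies, for some $C>0$ and all $x\ge x_0$, \[ \gamma_c(x)<\gamma_1^{\star}(x)\le\min\Big(\lim_{y\to\infty}\gamma_c(y),\;C\,x^{1/s}\Big), \] where $\gamma_c(x)=\frac{\sqrt{1+4P(x)}-1}{2}$. In particular, if $\lim_{x\to\infty}P(x)<\infty$, the separatrix is the only bounded global solution.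
   Context: Solutions are taken in the region $x>0$, $\gamma_1>0$; a solution is global if it can be continued, remaining strictly positive, to all $x\ge x_0$. Under the stated hypotheses there is a unique value $\gamma_1^{\star}(x_0)>0$ such that the solution with initial value $\gamma_1(x_0)$ is global if and only if $\gamma_1(x_0)\ge\gamma_1^{\star}(x_0)$; the separatrix $\gamma_1^{\star}(x)$ is the solution with initial value $\gamma_1^{\star}(x_0)$ (the smallest global solution). *)

theory Defs
  imports "HOL-Analysis.Analysis"
begin

definition C2_on_nonneg :: "(real \<Rightarrow> real) \<Rightarrow> bool" where
  "C2_on_nonneg P \<longleftrightarrow> (\<exists>P1 P2.
     (\<forall>x\<ge>0. (P has_real_derivative P1 x) (at x within {0..}) \<and>
              (P1 has_real_derivative P2 x) (at x within {0..})) \<and>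
     continuous_on {0..} P2)"

definition ode_rhs :: "real \<Rightarrow> (real \<Rightarrow> real) \<Rightarrow> real \<Rightarrow> real \<Rightarrow> real" where
  "ode_rhs s P x g = (g + g^2 - P x) / (s * x * g)"

definition global_sol :: "real \<Rightarrow> (real \<Rightarrow> real) \<Rightarrow> real \<Rightarrow> (real \<Rightarrow> real) \<Rightarrow> bool" where
  "global_sol s P x0 g \<longleftrightarrow>
     (\<forall>x\<ge>x0. g x > 0 \<and> (g has_real_derivative ode_rhs s P x (g x)) (at x within {x0..}))"

definition separatrix :: "real \<Rightarrow> (real \<Rightarrow> real) \<Rightarrow> real \<Rightarrow> (real \<Rightarrow> real) \<Rightarrow> bool" where
  "separatrix s P x0 g \<longleftrightarrow> global_sol s P x0 g \<and>
     (\<forall>h. global_sol s P x0 h \<longrightarrow> g x0 \<le> h x0)"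

definition gamma_c :: "(real \<Rightarrow> real) \<Rightarrow> real \<Rightarrow> real" where
  "gamma_c P x = (sqrt (1 + 4 * P x) - 1) / 2"

end

theory Submission
  imports Defs
begin

text \<open>Written as \<open>s x \<gamma>' = 1 + \<gamma> - P/\<gamma>\<close>, the equation has a right-hand side increasing in \<open>\<gamma>\<close>,
  so solutions are ordered. As \<open>P/\<gamma>\<close> decreases in \<open>\<gamma>\<close>, the difference \<open>\<delta>\<close> of two solutions satisfies
  \<open>s x \<delta>' \<ge> \<delta>\<close>, while \<open>s x (1 + \<gamma>)' \<le> 1 + \<gamma>\<close>; comparing with \<open>c x\<^sup>1\<^sup>/\<^sup>s\<close> gives the
  two-sided growth of solutions above the separatrix and the bound \<open>C x\<^sup>1\<^sup>/\<^sup>s\<close>.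
  A solution that reaches the nullcline \<open>\<gamma> + \<gamma>\<^sup>2 = P\<close> (i.e. \<open>\<gamma> \<le> \<gamma>\<^sub>c\<close>) is trapped below it,
  and then \<open>(\<gamma>\<^sup>2)' \<le> -2\<delta>/(s x)\<close> forces \<open>\<gamma>\<^sup>2\<close> to become negative; so global solutions stay
  above \<open>\<gamma>\<^sub>c\<close>. If the separatrix exceeded \<open>sup \<gamma>\<^sub>c\<close> at some \<open>x\<^sub>1\<close>, the solution through
  \<open>(x\<^sub>1, v)\<close> with \<open>sup \<gamma>\<^sub>c < v < \<gamma>\<^sup>\<star>(x\<^sub>1)\<close> would be global (it stays above \<open>v\<close> forwards
  and above a small constant backwards) and lie below the separatrix. Hence the separatrix is
  bounded by \<open>sup \<gamma>\<^sub>c\<close>, and every other global solution separates from it like \<open>x\<^sup>1\<^sup>/\<^sup>s\<close>.\<close>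

section \<open>Picard iteration on a half-line\<close>

lemma at_within_atLeastAtMost_eq_atLeast:
  fixes a t N :: real
  assumes "t < N"
  shows "at t within {a..N} = at t within {a..}"
  by (rule at_within_nhd[where S="{..<N}"]) (use assms in \<open>auto simp: open_lessThan\<close>)

lemma at_within_atLeast_eq_at:
  fixes a t :: real
  assumes "a < t"
  shows "at t within {a..} = at t"
  by (rule at_within_nhd[where S="{a<..}"]) (use assms in auto)

lemma indefinite_integral_has_real_derivative_atLeast:
  fixes f :: "real \<Rightarrow> real"
  assumes "continuous_on {a..} f" "a \<le> t"
  shows "((\<lambda>x. integral {a..x} f) has_real_derivative f t) (at t within {a..})"
proof -
  have "continuous_on {a..t+1} f" using assms(1) by (rule continuous_on_subset) auto
  from integral_has_real_derivative[OF this, of t] assms(2)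
  show ?thesis using at_within_atLeastAtMost_eq_atLeast[of t "t+1" a] by simp
qed

lemma continuous_on_atLeast_if_atLeastAtMost:
  fixes f :: "real \<Rightarrow> real"
  assumes "\<And>N. a \<le> N \<Longrightarrow> continuous_on {a..N} f"
  shows "continuous_on {a..} f"
  unfolding continuous_on_eq_continuous_within
proof
  fix t assume t: "t \<in> {a..}"
  have "continuous_on {a..t+1} f" using assms t by auto
  then have "continuous (at t within {a..t+1}) f"
    using t by (simp add: continuous_on_eq_continuous_within)
  then show "continuous (at t within {a..}) f"
    using at_within_atLeastAtMost_eq_atLeast[of t "t+1" a] by simp
qed

lemma continuous_on_atLeast_if_derivative:
  fixes f f' :: "real \<Rightarrow> real"
  assumes "\<And>t. a \<le> t \<Longrightarrow> (f has_real_derivative f' t) (at t within {a..})"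
  shows "continuous_on {a..} f"
  unfolding continuous_on_eq_continuous_within using assms DERIV_continuous by fastforce

lemma has_integral_power_diff:
  fixes a t :: real
  assumes "a \<le> t"
  shows "((\<lambda>\<tau>. (\<tau> - a)^n) has_integral (t - a)^(Suc n) / real (Suc n)) {a..t}"
proof -
  have "((\<lambda>\<tau>. (\<tau> - a)^(Suc n) / real (Suc n)) has_vector_derivative (\<tau> - a)^n)
          (at \<tau> within {a..t})" for \<tau>
    unfolding has_real_derivative_iff_has_vector_derivative[symmetric]
    by (rule derivative_eq_intros refl | simp)+
  from fundamental_theorem_of_calculus[OF assms this] show ?thesis by simp
qed

locale lipschitz_ode =
  fixes F :: "real \<Rightarrow> real \<Rightarrow> real" and a K :: real
  assumes K_nonneg: "0 \<le> K"
    and continuous_F: "\<And>y. continuous_on {a..} (\<lambda>t. F t y)"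
    and lipschitz_F: "\<And>t y z. a \<le> t \<Longrightarrow> \<bar>F t y - F t z\<bar> \<le> K * \<bar>y - z\<bar>"
begin

lemma continuous_on_F_comp:
  assumes \<phi>: "continuous_on {a..} \<phi>"
  shows "continuous_on {a..} (\<lambda>t. F t (\<phi> t))"
  unfolding continuous_on_def
proof
  fix t assume t: "t \<in> {a..}"
  have "((\<lambda>u. F u (\<phi> t)) \<longlongrightarrow> F t (\<phi> t)) (at t within {a..})"
    using continuous_F[of "\<phi> t"] t by (simp add: continuous_on_def)
  moreover have "((\<lambda>u. F u (\<phi> u) - F u (\<phi> t)) \<longlongrightarrow> 0) (at t within {a..})"
  proof (rule Lim_null_comparison)
    show "\<forall>\<^sub>F u in at t within {a..}. norm (F u (\<phi> u) - F u (\<phi> t)) \<le> K * \<bar>\<phi> u - \<phi> t\<bar>"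
      unfolding eventually_at_filter by (intro always_eventually) (auto intro: lipschitz_F)
    have "((\<lambda>u. \<phi> u - \<phi> t) \<longlongrightarrow> 0) (at t within {a..})"
      using \<phi> t by (simp add: continuous_on_def LIM_zero)
    then show "((\<lambda>u. K * \<bar>\<phi> u - \<phi> t\<bar>) \<longlongrightarrow> 0) (at t within {a..})"
      by (intro tendsto_mult_right_zero tendsto_rabs_zero)
  qed
  ultimately show "((\<lambda>u. F u (\<phi> u)) \<longlongrightarrow> F t (\<phi> t)) (at t within {a..})"
    using tendsto_add by fastforce
qed

lemma integrable_F_comp:
  assumes "continuous_on {a..} \<phi>"
  shows "(\<lambda>\<tau>. F \<tau> (\<phi> \<tau>)) integrable_on {a..t}"
  by (rule integrable_continuous_interval, rule continuous_on_subset[OF continuous_on_F_comp])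
     (use assms in auto)

primrec picard_iter :: "real \<Rightarrow> nat \<Rightarrow> real \<Rightarrow> real" where
  "picard_iter y0 0 = (\<lambda>t. y0)"
| "picard_iter y0 (Suc n) = (\<lambda>t. y0 + integral {a..t} (\<lambda>\<tau>. F \<tau> (picard_iter y0 n \<tau>)))"

lemma picard_iter_Suc:
  "picard_iter y0 (Suc n) t = y0 + integral {a..t} (\<lambda>\<tau>. F \<tau> (picard_iter y0 n \<tau>))"
  by simp

declare picard_iter.simps(2) [simp del]

lemma continuous_on_picard_iter: "continuous_on {a..} (picard_iter y0 n)"
proof (induction n)
  case (Suc n)
  have "((\<lambda>t. y0 + integral {a..t} (\<lambda>\<tau>. F \<tau> (picard_iter y0 n \<tau>))) has_real_derivative
          F t (picard_iter y0 n t)) (at t within {a..})" if "a \<le> t" for t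
    using indefinite_integral_has_real_derivative_atLeast[OF continuous_on_F_comp[OF Suc] that]
    by (auto intro!: derivative_eq_intros)
  then show ?case unfolding picard_iter_Suc by (rule continuous_on_atLeast_if_derivative)
qed simp

lemma picard_iter_step_bound:
  assumes B0: "\<And>t. t \<in> {a..N} \<Longrightarrow> \<bar>F t y0\<bar> \<le> B0" and t: "t \<in> {a..N}"
  shows "\<bar>picard_iter y0 (Suc n) t - picard_iter y0 n t\<bar> \<le> B0 * (N - a) * (K * (t - a))^n / fact n"
  using t
proof (induction n arbitrary: t)
  case 0
  have "norm (integral {a..t} (\<lambda>\<tau>. F \<tau> y0)) \<le> integral {a..t} (\<lambda>_. B0)"
    by (rule integral_norm_bound_integral) (use 0 B0 integrable_F_comp[of "\<lambda>_. y0" t] in auto)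
  also have "\<dots> \<le> B0 * (N - a)"
    using 0 B0[of a] mult_left_mono[of "t - a" "N - a" B0] by (simp add: mult.commute)
  finally show ?case by (simp add: picard_iter_Suc)
next
  case (Suc n)
  let ?p = "picard_iter y0"
  define c where "c = K * B0 * (N - a) * K^n / fact n"
  have hi: "((\<lambda>\<tau>. c * (\<tau> - a)^n) has_integral c * ((t - a)^(Suc n) / real (Suc n))) {a..t}"
    using Suc.prems by (intro has_integral_mult_right has_integral_power_diff) auto
  have "\<bar>?p (Suc (Suc n)) t - ?p (Suc n) t\<bar>
        = norm (integral {a..t} (\<lambda>\<tau>. F \<tau> (?p (Suc n) \<tau>) - F \<tau> (?p n \<tau>)))"
    by (simp only: picard_iter_Suc[of y0 "Suc n" t] picard_iter_Suc[of y0 n t])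
       (simp add: integral_diff integrable_F_comp continuous_on_picard_iter)
  also have "\<dots> \<le> integral {a..t} (\<lambda>\<tau>. c * (\<tau> - a)^n)"
  proof (rule integral_norm_bound_integral)
    show "(\<lambda>\<tau>. F \<tau> (?p (Suc n) \<tau>) - F \<tau> (?p n \<tau>)) integrable_on {a..t}"
      by (intro integrable_diff integrable_F_comp continuous_on_picard_iter)
    show "(\<lambda>\<tau>. c * (\<tau> - a)^n) integrable_on {a..t}" using hi by blast
    fix \<tau> assume \<tau>: "\<tau> \<in> {a..t}"
    have "norm (F \<tau> (?p (Suc n) \<tau>) - F \<tau> (?p n \<tau>)) \<le> K * \<bar>?p (Suc n) \<tau> - ?p n \<tau>\<bar>"
      using lipschitz_F \<tau> by auto
    also have "\<dots> \<le> K * (B0 * (N - a) * (K * (\<tau> - a))^n / fact n)"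
      using Suc.IH[of \<tau>] Suc.prems \<tau> K_nonneg by (intro mult_left_mono) auto
    also have "\<dots> = c * (\<tau> - a)^n" by (simp add: c_def power_mult_distrib)
    finally show "norm (F \<tau> (?p (Suc n) \<tau>) - F \<tau> (?p n \<tau>)) \<le> c * (\<tau> - a)^n" .
  qed
  also have "\<dots> = c * ((t - a)^(Suc n) / real (Suc n))" using hi by (rule integral_unique)
  also have "\<dots> = B0 * (N - a) * (K * (t - a))^(Suc n) / fact (Suc n)"
    by (simp only: c_def power_mult_distrib fact_Suc of_nat_mult power_Suc)
       (simp add: divide_simps ac_simps)
  finally show ?case .
qed

definition picard_limit :: "real \<Rightarrow> real \<Rightarrow> real" where
  "picard_limit y0 t = y0 + (\<Sum>i. picard_iter y0 (Suc i) t - picard_iter y0 i t)"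

lemma uniform_limit_picard_iter:
  assumes "a \<le> N"
  shows "uniform_limit {a..N} (picard_iter y0) (picard_limit y0) sequentially"
proof -
  let ?d = "\<lambda>i t. picard_iter y0 (Suc i) t - picard_iter y0 i t"
  have "bounded ((\<lambda>t. F t y0) ` {a..N})"
    by (intro compact_imp_bounded compact_continuous_image continuous_on_subset[OF continuous_F]) auto
  then obtain B0 where "\<forall>t\<in>{a..N}. \<bar>F t y0\<bar> \<le> B0"
    by (auto simp: bounded_iff)
  then have B0: "\<And>t. t \<in> {a..N} \<Longrightarrow> \<bar>F t y0\<bar> \<le> B0" by blast
  have C: "0 \<le> B0 * (N - a)" using B0[of a] assms by simp
  define M where "M n = B0 * (N - a) * ((K * (N - a))^n / fact n)" for n
  have "norm (?d n t) \<le> M n" if t: "t \<in> {a..N}" for n t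
  proof -
    have pow: "(K * (t - a))^n \<le> (K * (N - a))^n"
      using t K_nonneg by (intro power_mono mult_left_mono) auto
    have "norm (?d n t) \<le> B0 * (N - a) * (K * (t - a))^n / fact n"
      using picard_iter_step_bound[OF B0 t] by simp
    also have "\<dots> \<le> M n"
      unfolding M_def using C pow by (simp add: mult_left_mono divide_right_mono)
    finally show ?thesis .
  qed
  moreover have "summable M"
    unfolding M_def using summable_exp[of "K * (N - a)"]
    by (intro summable_mult) (simp add: divide_inverse mult.commute)
  ultimately have "uniform_limit {a..N} (\<lambda>n t. \<Sum>i<n. ?d i t) (\<lambda>t. \<Sum>i. ?d i t) sequentially"
    by (rule Weierstrass_m_test)
  then have "uniform_limit {a..N} (\<lambda>n t. y0 + (\<Sum>i<n. ?d i t)) (\<lambda>t. y0 + (\<Sum>i. ?d i t)) sequentially"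
    by (intro uniform_limit_add uniform_limit_const)
  moreover have "(\<lambda>n t. y0 + (\<Sum>i<n. ?d i t)) = picard_iter y0"
    using sum_lessThan_telescope[of "\<lambda>i. picard_iter y0 i _"] by (simp add: fun_eq_iff)
  ultimately show ?thesis by (simp add: picard_limit_def[abs_def])
qed

lemma continuous_on_picard_limit: "continuous_on {a..} (picard_limit y0)"
  by (intro continuous_on_atLeast_if_atLeastAtMost uniform_limit_theorem[OF _ uniform_limit_picard_iter])
     (auto intro!: always_eventually continuous_on_subset[OF continuous_on_picard_iter])

lemma uniform_limit_F_comp:
  assumes "uniform_limit S \<phi> \<psi> sequentially" "S \<subseteq> {a..}"
  shows "uniform_limit S (\<lambda>n t. F t (\<phi> n t)) (\<lambda>t. F t (\<psi> t)) sequentially"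
proof (rule uniform_limitI)
  fix e :: real assume e: "e > 0"
  then have "\<forall>\<^sub>F n in sequentially. \<forall>t\<in>S. dist (\<phi> n t) (\<psi> t) < e / (K + 1)"
    using K_nonneg by (intro uniform_limitD[OF assms(1)]) auto
  then show "\<forall>\<^sub>F n in sequentially. \<forall>t\<in>S. dist (F t (\<phi> n t)) (F t (\<psi> t)) < e"
  proof (rule eventually_mono, intro ballI)
    fix n t assume close: "\<forall>t\<in>S. dist (\<phi> n t) (\<psi> t) < e / (K + 1)" and t: "t \<in> S"
    have "dist (F t (\<phi> n t)) (F t (\<psi> t)) \<le> K * dist (\<phi> n t) (\<psi> t)"
      using lipschitz_F[of t] t assms(2) by (auto simp: dist_real_def)
    also have "\<dots> \<le> K * (e / (K + 1))"
      using close t K_nonneg by (intro mult_left_mono) auto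
    also have "\<dots> < e" using e K_nonneg by (simp add: field_simps)
    finally show "dist (F t (\<phi> n t)) (F t (\<psi> t)) < e" .
  qed
qed

lemma picard_limit_integral_eq:
  assumes "a \<le> t"
  shows "picard_limit y0 t = y0 + integral {a..t} (\<lambda>\<tau>. F \<tau> (picard_limit y0 \<tau>))"
proof -
  let ?Y = "picard_limit y0"
  have "uniform_limit {a..t} (\<lambda>n \<tau>. F \<tau> (picard_iter y0 n \<tau>)) (\<lambda>\<tau>. F \<tau> (?Y \<tau>)) sequentially"
    using uniform_limit_picard_iter[OF assms] by (rule uniform_limit_F_comp) auto
  then obtain I J where I: "\<And>n. ((\<lambda>\<tau>. F \<tau> (picard_iter y0 n \<tau>)) has_integral I n) {a..t}"
    and J: "((\<lambda>\<tau>. F \<tau> (?Y \<tau>)) has_integral J) {a..t}" and IJ: "I \<longlonglongrightarrow> J"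
    by (rule uniform_limit_integral)
       (auto intro: continuous_on_subset[OF continuous_on_F_comp[OF continuous_on_picard_iter]])
  have "(\<lambda>n. picard_iter y0 (Suc n) t) \<longlonglongrightarrow> y0 + J"
    using IJ by (simp add: picard_iter_Suc integral_unique[OF I] tendsto_add)
  moreover have "(\<lambda>n. picard_iter y0 (Suc n) t) \<longlonglongrightarrow> ?Y t"
    using tendsto_uniform_limitI[OF uniform_limit_picard_iter[OF assms], of t] assms
    by (intro LIMSEQ_Suc) simp
  ultimately show ?thesis using J by (simp add: integral_unique LIMSEQ_unique)
qed

theorem picard_lindeloef_atLeast:
  "\<exists>y. y a = y0 \<and> (\<forall>t\<ge>a. (y has_real_derivative F t (y t)) (at t within {a..}))"
proof (intro exI[of _ "picard_limit y0"] conjI allI impI)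
  show "picard_limit y0 a = y0" using picard_limit_integral_eq[of a y0] by simp
  fix t assume "a \<le> t"
  have "((\<lambda>x. y0 + integral {a..x} (\<lambda>\<tau>. F \<tau> (picard_limit y0 \<tau>))) has_real_derivative
         F t (picard_limit y0 t)) (at t within {a..})"
    using indefinite_integral_has_real_derivative_atLeast[OF
        continuous_on_F_comp[OF continuous_on_picard_limit] \<open>a \<le> t\<close>]
    by (auto intro!: derivative_eq_intros)
  then show "(picard_limit y0 has_real_derivative F t (picard_limit y0 t)) (at t within {a..})"
    by (rule has_field_derivative_transform_within[where d=1])
       (use \<open>a \<le> t\<close> picard_limit_integral_eq in auto)
qed

end

section \<open>Differential inequalities\<close>

lemma last_nonpos_point:
  fixes u :: "real \<Rightarrow> real"
  assumes "a \<le> b" "continuous_on {a..b} u" "u a \<le> 0" "u b > 0"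
  obtains t where "t \<in> {a..<b}" "u t \<le> 0" "\<And>z. z \<in> {t<..b} \<Longrightarrow> u z > 0"
proof -
  define S where "S = {a..b} \<inter> u -` {..0}"
  have "closed S" unfolding S_def by (rule continuous_closed_preimage) (use assms in auto)
  moreover have "S \<noteq> {}" using assms by (auto simp: S_def)
  moreover have bdd: "bdd_above S" unfolding S_def by (auto intro: bdd_aboveI[where M=b])
  ultimately have "Sup S \<in> S" by (rule closed_contains_Sup[rotated 2])
  moreover have "u z > 0" if "z \<in> {Sup S<..b}" for z
    using that cSup_upper[OF _ bdd, of z] \<open>Sup S \<in> S\<close> by (force simp: S_def)
  ultimately show ?thesis using that assms(4) by (force simp: S_def)
qed

lemma nonpos_if_deriv_le_linear:
  fixes u :: "real \<Rightarrow> real"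
  assumes "a \<le> b" and cont: "continuous_on {a..b} u" and "u a \<le> 0"
    and deriv: "\<And>x. a < x \<Longrightarrow> x < b \<Longrightarrow>
                  \<exists>D. (u has_real_derivative D) (at x) \<and> (u x > 0 \<longrightarrow> D \<le> K * u x)"
  shows "u b \<le> 0"
proof (rule ccontr)
  assume "\<not> u b \<le> 0"
  then have "u b > 0" by simp
  with last_nonpos_point[OF \<open>a \<le> b\<close> cont \<open>u a \<le> 0\<close>]
  obtain t where t: "t \<in> {a..<b}" "u t \<le> 0" and pos: "\<And>z. z \<in> {t<..b} \<Longrightarrow> u z > 0"
    by blast
  define v where "v x = u x * exp (- K * x)" for x
  have "v b \<le> v t"
  proof (rule DERIV_nonpos_imp_decreasing_open[of t b v])
    show "t \<le> b" using t by auto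
    show "continuous_on {t..b} v" unfolding v_def
      by (intro continuous_intros continuous_on_subset[OF cont]) (use t in auto)
    fix x assume x: "t < x" "x < b"
    then obtain D where D: "(u has_real_derivative D) (at x)" "u x > 0 \<longrightarrow> D \<le> K * u x"
      using deriv[of x] t by auto
    have "D - K * u x \<le> 0" using D(2) pos[of x] x by simp
    then have le: "exp (- K * x) * (D - K * u x) \<le> 0" by (simp add: mult_nonneg_nonpos)
    have "(v has_real_derivative D * exp (- K * x) + u x * (exp (- K * x) * - K)) (at x)"
      unfolding v_def using D(1) by (auto intro!: derivative_eq_intros)
    then have "(v has_real_derivative exp (- K * x) * (D - K * u x)) (at x)"
      by (rule DERIV_cong) (simp add: algebra_simps)
    with le show "\<exists>y. (v has_real_derivative y) (at x) \<and> y \<le> 0" by blast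
  qed
  moreover have "v t \<le> 0" using t by (simp add: v_def mult_nonpos_nonneg)
  moreover have "v b > 0" using pos[of b] t by (simp add: v_def)
  ultimately show False by simp
qed

lemma has_real_derivative_mult_powr:
  fixes f :: "real \<Rightarrow> real"
  assumes "0 < z" "(f has_real_derivative D) (at z)"
  shows "((\<lambda>z. f z * z powr (-1/s)) has_real_derivative z powr (-1/s) * (D - f z / (s * z))) (at z)"
proof -
  have "((\<lambda>z. f z * z powr (-1/s)) has_real_derivative
          D * z powr (-1/s) + f z * ((-1/s) * z powr (-1/s - 1))) (at z)"
    using assms by (auto intro!: derivative_eq_intros)
  moreover have "D * z powr (-1/s) + f z * ((-1/s) * z powr (-1/s - 1))
                 = z powr (-1/s) * (D - f z / (s * z))"
    using assms(1) by (simp add: powr_diff field_simps)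
  ultimately show ?thesis by simp
qed

text \<open>Comparison with the solutions \<open>c x\<^sup>1\<^sup>/\<^sup>s\<close> of \<open>s x f' = f\<close>.\<close>
lemma powr_growth_lower:
  fixes f :: "real \<Rightarrow> real"
  assumes "0 < a" "a \<le> b" and cont: "continuous_on {a..b} f"
    and deriv: "\<And>z. a < z \<Longrightarrow> z < b \<Longrightarrow> \<exists>D. (f has_real_derivative D) (at z) \<and> f z / (s * z) \<le> D"
  shows "f a * (b / a) powr (1/s) \<le> f b"
proof -
  have "f a * a powr (-1/s) \<le> f b * b powr (-1/s)"
  proof (rule DERIV_nonneg_imp_increasing_open[OF \<open>a \<le> b\<close>])
    fix z assume z: "a < z" "z < b"
    with deriv obtain D where "(f has_real_derivative D) (at z)" "f z / (s * z) \<le> D" by blast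
    then show "\<exists>y. ((\<lambda>z. f z * z powr (-1/s)) has_real_derivative y) (at z) \<and> 0 \<le> y"
      using has_real_derivative_mult_powr[of z f D] z \<open>0 < a\<close> by force
  qed (use \<open>0 < a\<close> in \<open>intro continuous_intros cont, auto\<close>)
  then have "f a * a powr (-1/s) * b powr (1/s) \<le> f b * b powr (-1/s) * b powr (1/s)"
    by (intro mult_right_mono) auto
  then show ?thesis
    using assms(1,2) by (simp add: powr_divide powr_minus_divide powr_add[symmetric])
qed

lemma powr_growth_upper:
  fixes f :: "real \<Rightarrow> real"
  assumes "0 < a" "a \<le> b" and cont: "continuous_on {a..b} f"
    and deriv: "\<And>z. a < z \<Longrightarrow> z < b \<Longrightarrow> \<exists>D. (f has_real_derivative D) (at z) \<and> D \<le> f z / (s * z)"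
  shows "f b \<le> f a * (b / a) powr (1/s)"
proof -
  have "- f a * (b / a) powr (1/s) \<le> - f b"
  proof (rule powr_growth_lower[OF assms(1,2)])
    show "continuous_on {a..b} (\<lambda>z. - f z)" by (intro continuous_intros cont)
    fix z assume "a < z" "z < b"
    with deriv obtain D where "(f has_real_derivative D) (at z)" "D \<le> f z / (s * z)" by blast
    then show "\<exists>D. ((\<lambda>z. - f z) has_real_derivative D) (at z) \<and> - f z / (s * z) \<le> D"
      by (intro exI[of _ "- D"]) (auto intro: derivative_eq_intros)
  qed
  then show ?thesis by simp
qed

lemma clamped_rhs_lipschitz:
  fixes m p Pm q q0 u w :: real
  assumes "0 < m" "0 \<le> p" "p \<le> Pm" "0 < q0" "q0 \<le> q"
  shows "\<bar>(1 + max m u - p / max m u) / q - (1 + max m w - p / max m w) / q\<bar>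
         \<le> (1 + Pm / m^2) / q0 * \<bar>u - w\<bar>"
proof -
  define A B where "A = max m u" and "B = max m w"
  have A: "m \<le> A" and B: "m \<le> B" by (auto simp: A_def B_def)
  have eq: "(1 + A - p / A) / q - (1 + B - p / B) / q = (A - B) * (1 + p / (A * B)) / q"
    using A B assms by (simp add: field_simps)
  have "p / (A * B) \<le> Pm / m^2"
    using A B assms by (intro frac_le) (auto simp: power2_eq_square intro: mult_mono order_trans)
  moreover have "\<bar>A - B\<bar> \<le> \<bar>u - w\<bar>" by (auto simp: A_def B_def max_def)
  moreover have "0 \<le> p / (A * B)" using A B assms by simp
  ultimately have "\<bar>A - B\<bar> * (1 + p / (A * B)) / q \<le> \<bar>u - w\<bar> * (1 + Pm / m^2) / q0"
    using assms by (intro frac_le mult_mono) auto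
  then show ?thesis
    unfolding A_def B_def eq[unfolded A_def B_def] using assms
    by (simp add: abs_mult mult.commute)
qed

section \<open>The equation \<open>s x \<gamma>' = 1 + \<gamma> - P/\<gamma>\<close>\<close>

locale separatrix_ode =
  fixes s x0 :: real and P :: "real \<Rightarrow> real"
  assumes s_pos: "0 < s" and x0_pos: "0 < x0"
    and P_continuous: "continuous_on {0..} P"
    and P_strict_mono: "strict_mono_on {0..} P"
    and P_zero: "P 0 = 0"
begin

lemma P_less: "0 \<le> x \<Longrightarrow> x < y \<Longrightarrow> P x < P y"
  using P_strict_mono by (auto simp: strict_mono_on_def)

lemma P_mono: "0 \<le> x \<Longrightarrow> x \<le> y \<Longrightarrow> P x \<le> P y"
  using P_less[of x y] by (cases "x = y") auto

lemma P_nonneg: "0 \<le> x \<Longrightarrow> 0 \<le> P x"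
  using P_mono[of 0 x] P_zero by simp

lemma ode_rhs_eq: "0 < x \<Longrightarrow> 0 < g \<Longrightarrow> ode_rhs s P x g = (1 + g - P x / g) / (s * x)"
  unfolding ode_rhs_def using s_pos by (simp add: field_simps power2_eq_square)

lemma ode_rhs_diff_eq:
  "0 < x \<Longrightarrow> 0 < g \<Longrightarrow> 0 < h \<Longrightarrow>
    ode_rhs s P x g - ode_rhs s P x h = (g - h) * (1 + P x / (g * h)) / (s * x)"
  using s_pos by (simp add: ode_rhs_eq field_simps)

lemma gamma_c_less_iff:
  assumes "0 \<le> c"
  shows "gamma_c P x < c \<longleftrightarrow> P x < c + c^2"
proof -
  have sq: "(2 * c + 1)^2 = 1 + 4 * (c + c^2)" by (simp add: power2_eq_square algebra_simps)
  have "gamma_c P x < c \<longleftrightarrow> sqrt (1 + 4 * P x) < 2 * c + 1" by (auto simp: gamma_c_def)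
  also have "\<dots> \<longleftrightarrow> sqrt (1 + 4 * P x) < sqrt ((2 * c + 1)^2)" using assms by simp
  also have "\<dots> \<longleftrightarrow> P x < c + c^2" unfolding sq real_sqrt_less_iff
    by (simp only: add_less_cancel_left mult_less_cancel_left_pos zero_less_numeral)
  finally show ?thesis .
qed

lemma gamma_c_le_P: "0 \<le> x \<Longrightarrow> gamma_c P x \<le> P x"
proof -
  assume "0 \<le> x"
  then have "sqrt (1 + 4 * P x) \<le> sqrt ((1 + 2 * P x)^2)"
    using P_nonneg[of x] by (intro real_sqrt_le_mono) (simp add: power2_eq_square algebra_simps)
  also have "\<dots> = 1 + 2 * P x" using P_nonneg[OF \<open>0 \<le> x\<close>] by simp
  finally show ?thesis by (simp add: gamma_c_def)
qed

lemma gamma_c_mono: "0 \<le> x \<Longrightarrow> x \<le> y \<Longrightarrow> gamma_c P x \<le> gamma_c P y"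
  using P_mono by (simp add: gamma_c_def)

lemma global_sol_pos: "global_sol s P x0 g \<Longrightarrow> x0 \<le> x \<Longrightarrow> 0 < g x"
  unfolding global_sol_def by auto

lemma global_sol_has_derivative:
  assumes "global_sol s P x0 g" "x0 < x"
  shows "(g has_real_derivative ode_rhs s P x (g x)) (at x)"
proof -
  have "(g has_real_derivative ode_rhs s P x (g x)) (at x within {x0..})"
    using assms unfolding global_sol_def by auto
  then show ?thesis using at_within_atLeast_eq_at[OF assms(2)] by simp
qed

lemma global_sol_continuous: "global_sol s P x0 g \<Longrightarrow> continuous_on {x0..} g"
  unfolding global_sol_def
  by (rule continuous_on_atLeast_if_derivative[where f'="\<lambda>x. ode_rhs s P x (g x)"]) blast

lemma global_sol_mono:
  assumes g: "global_sol s P x0 g" and h: "global_sol s P x0 h"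
    and le: "g x0 \<le> h x0" and x: "x0 \<le> x"
  shows "g x \<le> h x"
proof -
  have cg: "continuous_on {x0..x} g" and ch: "continuous_on {x0..x} h"
    by (auto intro!: continuous_on_subset[OF global_sol_continuous[OF g]]
                     continuous_on_subset[OF global_sol_continuous[OF h]])
  obtain zg where "zg \<in> {x0..x}" and min_g: "\<And>y. y \<in> {x0..x} \<Longrightarrow> g zg \<le> g y"
    using continuous_attains_inf[OF compact_Icc _ cg] x by auto
  obtain zh where "zh \<in> {x0..x}" and min_h: "\<And>y. y \<in> {x0..x} \<Longrightarrow> h zh \<le> h y"
    using continuous_attains_inf[OF compact_Icc _ ch] x by auto
  have mg: "0 < g zg" and mh: "0 < h zh"
    using global_sol_pos[OF g, of zg] global_sol_pos[OF h, of zh] \<open>zg \<in> _\<close> \<open>zh \<in> _\<close> by auto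
  \<comment> \<open>on \<open>[x0, x]\<close> both solutions stay above a positive constant, so the equation is Lipschitz there\<close>
  define K where "K = (1 + P x / (g zg * h zh)) / (s * x0)"
  have "g x - h x \<le> 0"
  proof (rule nonpos_if_deriv_le_linear[OF x])
    show "continuous_on {x0..x} (\<lambda>y. g y - h y)" by (intro continuous_intros cg ch)
    show "g x0 - h x0 \<le> 0" using le by simp
    fix z assume z: "x0 < z" "z < x"
    then have gz: "g zg \<le> g z" and hz: "h zh \<le> h z" using min_g min_h by auto
    have "P z / (g z * h z) \<le> P x / (g zg * h zh)"
      using z x0_pos mg mh gz hz P_mono[of z x] P_nonneg[of z] by (intro frac_le mult_mono) auto
    moreover have "0 \<le> P z / (g z * h z)" using z x0_pos mg mh gz hz P_nonneg[of z] by simp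
    ultimately have rate: "(1 + P z / (g z * h z)) / (s * z) \<le> K"
      unfolding K_def using z s_pos x0_pos by (intro frac_le) auto
    have eq: "ode_rhs s P z (g z) - ode_rhs s P z (h z)
              = (g z - h z) * ((1 + P z / (g z * h z)) / (s * z))"
      using ode_rhs_diff_eq[of z "g z" "h z"] mg mh gz hz z x0_pos by simp
    show "\<exists>D. ((\<lambda>y. g y - h y) has_real_derivative D) (at z) \<and>
              (g z - h z > 0 \<longrightarrow> D \<le> K * (g z - h z))"
    proof (intro exI conjI impI)
      show "((\<lambda>y. g y - h y) has_real_derivative ode_rhs s P z (g z) - ode_rhs s P z (h z)) (at z)"
        using z by (intro DERIV_diff global_sol_has_derivative[OF g] global_sol_has_derivative[OF h]) auto
      assume "g z - h z > 0"
      then show "ode_rhs s P z (g z) - ode_rhs s P z (h z) \<le> K * (g z - h z)"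
        unfolding eq using mult_left_mono[OF rate, of "g z - h z"] by (simp add: mult.commute[of K])
    qed
  qed
  then show ?thesis by simp
qed

lemma global_sol_unique:
  "global_sol s P x0 g \<Longrightarrow> global_sol s P x0 h \<Longrightarrow> g x0 = h x0 \<Longrightarrow> x0 \<le> x \<Longrightarrow> g x = h x"
  using global_sol_mono[of g h x] global_sol_mono[of h g x] by force

text \<open>Since \<open>P/\<gamma>\<close> decreases in \<open>\<gamma>\<close>, the difference of two solutions satisfies \<open>s x \<delta>' \<ge> \<delta>\<close>.\<close>
lemma global_sol_diff_growth:
  assumes g: "global_sol s P x0 g" and h: "global_sol s P x0 h"
    and le: "h x0 \<le> g x0" and x: "x0 \<le> x"
  shows "(g x0 - h x0) * (x / x0) powr (1/s) \<le> g x - h x"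
proof (rule powr_growth_lower[OF x0_pos x])
  show "continuous_on {x0..x} (\<lambda>y. g y - h y)"
    by (intro continuous_intros continuous_on_subset[OF global_sol_continuous[OF g]]
        continuous_on_subset[OF global_sol_continuous[OF h]]) auto
  fix z assume z: "x0 < z" "z < x"
  have gz: "0 < g z" and hz: "0 < h z" and hg: "h z \<le> g z"
    using global_sol_pos[OF g] global_sol_pos[OF h] global_sol_mono[OF h g le] z by auto
  have "(g z - h z) / (s * z) \<le> (g z - h z) * (1 + P z / (g z * h z)) / (s * z)"
    using z x0_pos s_pos gz hz hg P_nonneg[of z]
    by (intro divide_right_mono) (auto simp: mult_le_cancel_left1)
  also have "\<dots> = ode_rhs s P z (g z) - ode_rhs s P z (h z)"
    using ode_rhs_diff_eq[of z "g z" "h z"] z x0_pos gz hz by simp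
  moreover have "((\<lambda>y. g y - h y) has_real_derivative ode_rhs s P z (g z) - ode_rhs s P z (h z)) (at z)"
    using z by (intro DERIV_diff global_sol_has_derivative[OF g] global_sol_has_derivative[OF h]) auto
  ultimately show "\<exists>D. ((\<lambda>y. g y - h y) has_real_derivative D) (at z) \<and> (g z - h z) / (s * z) \<le> D"
    by auto
qed

lemma global_sol_upper_growth:
  assumes g: "global_sol s P x0 g" and x: "x0 \<le> x"
  shows "1 + g x \<le> (1 + g x0) * (x / x0) powr (1/s)"
proof (rule powr_growth_upper[OF x0_pos x])
  show "continuous_on {x0..x} (\<lambda>y. 1 + g y)"
    by (intro continuous_intros continuous_on_subset[OF global_sol_continuous[OF g]]) auto
  fix z assume z: "x0 < z" "z < x"
  have "ode_rhs s P z (g z) \<le> (1 + g z) / (s * z)"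
    using z x0_pos s_pos global_sol_pos[OF g, of z] P_nonneg[of z]
    by (simp add: ode_rhs_eq divide_right_mono)
  moreover have "((\<lambda>y. 1 + g y) has_real_derivative ode_rhs s P z (g z)) (at z)"
    using global_sol_has_derivative[OF g, of z] z by (auto intro!: derivative_eq_intros)
  ultimately show "\<exists>D. ((\<lambda>y. 1 + g y) has_real_derivative D) (at z) \<and> D \<le> (1 + g z) / (s * z)"
    by blast
qed

lemma global_sol_le_powr:
  assumes "global_sol s P x0 g" "x0 \<le> x"
  shows "g x \<le> (1 + g x0) / x0 powr (1/s) * x powr (1/s)"
  using global_sol_upper_growth[OF assms] assms(2) x0_pos by (simp add: powr_divide)

lemma global_sol_trapped_below_nullcline:
  assumes g: "global_sol s P x0 g" and x1: "x0 \<le> x1" and below: "g x1 + (g x1)^2 \<le> P x1"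
    and x: "x1 \<le> x"
  shows "g x \<le> g x1"
proof -
  define c where "c = g x1"
  have c: "0 < c" using global_sol_pos[OF g x1] by (simp add: c_def)
  define K where "K = (1 / c + 2) / (s * x0)"
  have "g x - c \<le> 0"
  proof (rule nonpos_if_deriv_le_linear[OF x])
    show "continuous_on {x1..x} (\<lambda>z. g z - c)"
      by (intro continuous_intros continuous_on_subset[OF global_sol_continuous[OF g]]) (use x1 in auto)
    show "g x1 - c \<le> 0" by (simp add: c_def)
    fix z assume z: "x1 < z" "z < x"
    then have z0: "x0 < z" and zpos: "0 < z" using x1 x0_pos by auto
    have gz: "0 < g z" using global_sol_pos[OF g] z0 by simp
    show "\<exists>D. ((\<lambda>z. g z - c) has_real_derivative D) (at z) \<and> (g z - c > 0 \<longrightarrow> D \<le> K * (g z - c))"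
    proof (intro exI conjI impI)
      show "((\<lambda>z. g z - c) has_real_derivative ode_rhs s P z (g z)) (at z)"
        using global_sol_has_derivative[OF g z0] by (auto intro!: derivative_eq_intros)
      assume gc: "g z - c > 0"
      have "ode_rhs s P z (g z) \<le> (g z + (g z)^2 - (c + c^2)) / (s * z * g z)"
        unfolding ode_rhs_def using P_mono[of x1 z] below z x1 x0_pos zpos gz s_pos
        by (intro divide_right_mono) (auto simp: c_def)
      also have "\<dots> = (g z - c) * ((1 + c) / g z + 1) / (s * z)"
        using gz zpos s_pos by (simp add: power2_eq_square field_simps)
      also have "\<dots> \<le> (g z - c) * ((1 + c) / c + 1) / (s * x0)"
        using gc c gz zpos z0 s_pos x0_pos
        by (intro frac_le mult_left_mono add_right_mono divide_left_mono mult_left_mono) auto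
      also have "\<dots> = K * (g z - c)" using c by (simp add: K_def field_simps)
      finally show "ode_rhs s P z (g z) \<le> K * (g z - c)" .
    qed
  qed
  then show ?thesis by (simp add: c_def)
qed

text \<open>Strictly below the nullcline, \<open>(\<gamma>\<^sup>2)' \<le> -2\<delta>/(s x)\<close>, so \<open>\<gamma>\<^sup>2\<close> would have to decrease like
  \<open>-(2\<delta>/s) ln x\<close> and become negative.\<close>
lemma global_sol_not_below_nullcline:
  assumes g: "global_sol s P x0 g" and x1: "x0 \<le> x1" and \<delta>: "0 < \<delta>"
    and below: "\<And>x. x1 \<le> x \<Longrightarrow> g x + (g x)^2 + \<delta> \<le> P x"
  shows False
proof -
  define w where "w x = (g x)^2 + (2 * \<delta> / s) * ln x" for x
  define X where "X = max x1 (exp (s * w x1 / (2 * \<delta>) + 1))"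
  have X: "x1 \<le> X" "0 < X" using x1 x0_pos by (auto simp: X_def)
  have "w X \<le> w x1"
  proof (rule DERIV_nonpos_imp_decreasing_open[of x1 X w])
    show "x1 \<le> X" by (rule X)
    show "continuous_on {x1..X} w" unfolding w_def using x1 x0_pos
      by (intro continuous_intros continuous_on_subset[OF global_sol_continuous[OF g]]) auto
    fix z assume z: "x1 < z" "z < X"
    then have z0: "x0 < z" and zpos: "0 < z" using x1 x0_pos by auto
    have gz: "0 < g z" using global_sol_pos[OF g] z0 by simp
    have "(w has_real_derivative 2 * g z * ode_rhs s P z (g z) + (2 * \<delta> / s) * (1 / z)) (at z)"
      unfolding w_def using global_sol_has_derivative[OF g z0] zpos s_pos
      by (auto intro!: derivative_eq_intros)
    moreover have "2 * g z * ode_rhs s P z (g z) + (2 * \<delta> / s) * (1 / z)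
                   = 2 * (g z + (g z)^2 - P z + \<delta>) / (s * z)"
      using gz zpos s_pos by (simp add: ode_rhs_def field_simps)
    moreover have "2 * (g z + (g z)^2 - P z + \<delta>) / (s * z) \<le> 0"
      using below[of z] z zpos s_pos by (simp add: divide_nonpos_pos)
    ultimately show "\<exists>D. (w has_real_derivative D) (at z) \<and> D \<le> 0" by auto
  qed
  moreover have "w x1 + 2 * \<delta> / s \<le> (2 * \<delta> / s) * ln X"
  proof -
    have "s * w x1 / (2 * \<delta>) + 1 \<le> ln X"
      using X by (subst ln_ge_iff) (auto simp: X_def)
    then have "(2 * \<delta> / s) * (s * w x1 / (2 * \<delta>) + 1) \<le> (2 * \<delta> / s) * ln X"
      using \<delta> s_pos by (intro mult_left_mono) auto
    moreover have "(2 * \<delta> / s) * (s * w x1 / (2 * \<delta>) + 1) = w x1 + 2 * \<delta> / s"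
      using \<delta> s_pos by (simp add: field_simps)
    ultimately show ?thesis by simp
  qed
  moreover have "0 < 2 * \<delta> / s" using \<delta> s_pos by simp
  ultimately show False using zero_le_power2[of "g X"] unfolding w_def by linarith
qed

lemma gamma_c_less_global_sol:
  assumes g: "global_sol s P x0 g" and x1: "x0 \<le> x1"
  shows "gamma_c P x1 < g x1"
proof (rule ccontr)
  assume "\<not> gamma_c P x1 < g x1"
  then have below: "g x1 + (g x1)^2 \<le> P x1"
    using gamma_c_less_iff[of "g x1" x1] global_sol_pos[OF g x1] by simp
  define \<delta> where "\<delta> = P (x1 + 1) - P x1"
  have "0 < \<delta>" using P_less[of x1 "x1 + 1"] x1 x0_pos by (simp add: \<delta>_def)
  moreover have "g x + (g x)^2 + \<delta> \<le> P x" if "x1 + 1 \<le> x" for x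
  proof -
    have "g x \<le> g x1" "0 < g x"
      using global_sol_trapped_below_nullcline[OF g x1 below, of x] global_sol_pos[OF g, of x] x1 that
      by auto
    then have "g x + (g x)^2 \<le> g x1 + (g x1)^2" by (intro add_mono power_mono) auto
    then show ?thesis using below P_mono[of "x1 + 1" x] that x1 x0_pos by (simp add: \<delta>_def)
  qed
  ultimately show False using global_sol_not_below_nullcline[OF g, of "x1 + 1" \<delta>] x1 by auto
qed

subsection \<open>Solutions through a prescribed point\<close>

text \<open>Above a level \<open>v\<close> with \<open>v + v\<^sup>2 > P\<close> the right-hand side is positive, so the solution
  through \<open>(x1, v)\<close> of the equation with \<open>\<gamma>\<close> clamped below at \<open>v\<close> never reaches the clamp.\<close>
lemma forward_solution:
  assumes x1: "0 < x1" and v: "0 < v" and P_below: "\<And>x. x1 \<le> x \<Longrightarrow> P x < v + v^2"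
  obtains y where "y x1 = v"
    and "\<And>t. x1 \<le> t \<Longrightarrow> v \<le> y t"
    and "\<And>t. x1 \<le> t \<Longrightarrow> (y has_real_derivative ode_rhs s P t (y t)) (at t within {x1..})"
proof -
  define F where "F x u = (1 + max v u - P x / max v u) / (s * x)" for x u
  have "lipschitz_ode F x1 ((1 + (v + v^2) / v^2) / (s * x1))"
  proof
    show "0 \<le> (1 + (v + v^2) / v^2) / (s * x1)" using v s_pos x1 by simp
    show "continuous_on {x1..} (\<lambda>t. F t y)" for y
      unfolding F_def using x1 s_pos v
      by (intro continuous_intros continuous_on_subset[OF P_continuous]) (auto simp: max_def)
    show "\<bar>F t y - F t z\<bar> \<le> (1 + (v + v^2) / v^2) / (s * x1) * \<bar>y - z\<bar>" if "x1 \<le> t" for t y z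
      unfolding F_def
      using that v x1 s_pos P_nonneg[of t] P_below[of t]
      by (intro clamped_rhs_lipschitz) auto
  qed
  then obtain y where y0: "y x1 = v"
    and y: "\<And>t. x1 \<le> t \<Longrightarrow> (y has_real_derivative F t (y t)) (at t within {x1..})"
    using lipschitz_ode.picard_lindeloef_atLeast by blast
  have ge: "v \<le> y t" if t: "x1 \<le> t" for t
  proof -
    have "v - y t \<le> 0"
    proof (rule nonpos_if_deriv_le_linear[OF t])
      show "continuous_on {x1..t} (\<lambda>z. v - y z)"
        by (intro continuous_intros continuous_on_subset[OF continuous_on_atLeast_if_derivative[OF y]])
           auto
      show "v - y x1 \<le> 0" by (simp add: y0)
      fix z assume z: "x1 < z" "z < t"
      have "((\<lambda>z. v - y z) has_real_derivative - F z (y z)) (at z)"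
        using y[of z] at_within_atLeast_eq_at[of x1 z] z by (auto intro!: derivative_eq_intros)
      moreover have "- F z (y z) \<le> 0 * (v - y z)" if "v - y z > 0"
      proof -
        have "P z / v < 1 + v"
          using P_below[of z] z v by (simp add: divide_less_eq power2_eq_square algebra_simps)
        then show ?thesis using that z x1 s_pos by (simp add: F_def max_def)
      qed
      ultimately show "\<exists>D. ((\<lambda>z. v - y z) has_real_derivative D) (at z) \<and>
                          (v - y z > 0 \<longrightarrow> D \<le> 0 * (v - y z))"
        by blast
    qed
    then show ?thesis by simp
  qed
  have "(y has_real_derivative ode_rhs s P t (y t)) (at t within {x1..})" if t: "x1 \<le> t" for t
  proof -
    have "F t (y t) = ode_rhs s P t (y t)"
      using ge[OF t] v t x1 by (simp add: F_def ode_rhs_eq max_def)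
    then show ?thesis using y[OF t] by simp
  qed
  from y0 ge this show thesis by (rule that)
qed

text \<open>Backwards in \<open>x\<close> the equation pushes small values of \<open>\<gamma>\<close> up, so the solution through
  \<open>(b, v)\<close> stays above \<open>m\<close> on \<open>[a, b]\<close> once \<open>m + m\<^sup>2 < P a\<close>. It is obtained by solving the
  equation in the reversed variable \<open>\<tau> = a + b - x\<close>, clamped below at \<open>m\<close> and frozen for \<open>\<tau> > b\<close>.\<close>
lemma backward_solution:
  assumes a: "0 < a" "a \<le> b" and v: "0 < v"
  obtains y where "y b = v"
    and "\<And>x. x \<in> {a..b} \<Longrightarrow> 0 < y x"
    and "\<And>x. x \<in> {a..b} \<Longrightarrow> (y has_real_derivative ode_rhs s P x (y x)) (at x within {a..b})"
proof -
  define m where "m = min v (min (1/2) (P a / 4))"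
  have Pa: "0 < P a" using P_less[of 0 a] P_zero a by simp
  have m: "0 < m" "m \<le> v" using v Pa by (auto simp: m_def)
  have m_below: "m + m^2 < P a"
  proof -
    have "m \<le> 1/2" "m \<le> P a / 4" by (auto simp: m_def)
    then have "m^2 \<le> m / 2" using m by (simp add: power2_eq_square mult_left_mono)
    then show ?thesis using \<open>m \<le> P a / 4\<close> Pa by linarith
  qed
  define r where "r \<tau> = a + b - min \<tau> b" for \<tau>
  have r: "a \<le> r \<tau>" "r \<tau> \<le> b" if "a \<le> \<tau>" for \<tau> using that a by (auto simp: r_def)
  define F where "F \<tau> u = - ((1 + max m u - P (r \<tau>) / max m u) / (s * r \<tau>))" for \<tau> u
  have "lipschitz_ode F a ((1 + P b / m^2) / (s * a))"
  proof
    show "0 \<le> (1 + P b / m^2) / (s * a)" using P_nonneg[of b] a s_pos by simp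
    have cr: "continuous_on {a..} r" unfolding r_def by (intro continuous_intros)
    then have cPr: "continuous_on {a..} (\<lambda>\<tau>. P (r \<tau>))"
      by (rule continuous_on_compose2[OF P_continuous]) (use r a in force)
    have "s * r \<tau> \<noteq> 0" "max m y \<noteq> 0" if "a \<le> \<tau>" for \<tau> y
      using r[OF that] a s_pos m by auto
    then show "continuous_on {a..} (\<lambda>\<tau>. F \<tau> y)" for y
      unfolding F_def by (intro continuous_intros cr cPr) auto
    show "\<bar>F \<tau> y - F \<tau> z\<bar> \<le> (1 + P b / m^2) / (s * a) * \<bar>y - z\<bar>" if "a \<le> \<tau>" for \<tau> y z
      using clamped_rhs_lipschitz[of m "P (r \<tau>)" "P b" "s * a" "s * r \<tau>" y z]
        r[OF that] a s_pos m P_nonneg[of "r \<tau>"] P_mono[of "r \<tau>" b]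
      unfolding F_def by (simp add: abs_minus_commute)
  qed
  then obtain H where H0: "H a = v"
    and H: "\<And>\<tau>. a \<le> \<tau> \<Longrightarrow> (H has_real_derivative F \<tau> (H \<tau>)) (at \<tau> within {a..})"
    using lipschitz_ode.picard_lindeloef_atLeast by blast
  have Hm: "m \<le> H \<tau>" if \<tau>: "a \<le> \<tau>" for \<tau>
  proof -
    have "m - H \<tau> \<le> 0"
    proof (rule nonpos_if_deriv_le_linear[OF \<tau>])
      show "continuous_on {a..\<tau>} (\<lambda>z. m - H z)"
        by (intro continuous_intros continuous_on_subset[OF continuous_on_atLeast_if_derivative[OF H]])
           auto
      show "m - H a \<le> 0" using m by (simp add: H0)
      fix z assume z: "a < z" "z < \<tau>"
      have "((\<lambda>z. m - H z) has_real_derivative - F z (H z)) (at z)"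
        using H[of z] at_within_atLeast_eq_at[of a z] z by (auto intro!: derivative_eq_intros)
      moreover have "- F z (H z) \<le> 0 * (m - H z)" if "m - H z > 0"
      proof -
        have "P a \<le> P (r z)" using P_mono[of a "r z"] r[of z] z a by simp
        then have "1 + m < P (r z) / m" using m_below m by (simp add: less_divide_eq power2_eq_square algebra_simps)
        then have "(1 + m - P (r z) / m) / (s * r z) < 0"
          using r[of z] z a s_pos by (intro divide_neg_pos) auto
        then show ?thesis using that by (simp add: F_def max_def)
      qed
      ultimately show "\<exists>D. ((\<lambda>z. m - H z) has_real_derivative D) (at z) \<and>
                          (m - H z > 0 \<longrightarrow> D \<le> 0 * (m - H z))"
        by blast
    qed
    then show ?thesis by simp
  qed
  have "((\<lambda>x. H (a + b - x)) has_real_derivative ode_rhs s P x (H (a + b - x))) (at x within {a..b})"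
    if x: "x \<in> {a..b}" for x
  proof -
    define \<tau> where "\<tau> = a + b - x"
    have \<tau>: "a \<le> \<tau>" "\<tau> \<le> b" "r \<tau> = x" using x by (auto simp: \<tau>_def r_def)
    have "(H has_real_derivative F \<tau> (H \<tau>)) (at \<tau> within ((\<lambda>x. a + b - x) ` {a..b}))"
      by (rule DERIV_subset[OF H[OF \<tau>(1)]]) auto
    then have "(H has_real_derivative F \<tau> (H \<tau>)) (at ((\<lambda>x. a + b - x) x) within ((\<lambda>x. a + b - x) ` {a..b}))"
      by (simp add: \<tau>_def)
    moreover have "((\<lambda>x. a + b - x) has_real_derivative -1) (at x within {a..b})"
      by (auto intro!: derivative_eq_intros)
    ultimately have "(H \<circ> (\<lambda>x. a + b - x) has_real_derivative F \<tau> (H \<tau>) * -1) (at x within {a..b})"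
      by (rule DERIV_image_chain)
    moreover have "F \<tau> (H \<tau>) * -1 = ode_rhs s P x (H \<tau>)"
      using Hm[OF \<tau>(1)] m x a \<tau> by (simp add: F_def ode_rhs_eq max_def)
    ultimately show ?thesis by (simp add: o_def \<tau>_def)
  qed
  moreover have "0 < H (a + b - x)" if "x \<in> {a..b}" for x using Hm[of "a + b - x"] m that by simp
  moreover have "H (a + b - b) = v" using H0 by simp
  ultimately show thesis using that[of "\<lambda>x. H (a + b - x)"] by blast
qed

lemma global_sol_through:
  assumes x1: "x0 \<le> x1" and v: "0 < v" and P_below: "\<And>x. x1 \<le> x \<Longrightarrow> P x < v + v^2"
  obtains h where "global_sol s P x0 h" "h x1 = v"
proof -
  have "0 < x1" using x1 x0_pos by simp
  obtain yr where yr0: "yr x1 = v" and yr_ge: "\<And>t. x1 \<le> t \<Longrightarrow> v \<le> yr t"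
    and yr: "\<And>t. x1 \<le> t \<Longrightarrow> (yr has_real_derivative ode_rhs s P t (yr t)) (at t within {x1..})"
    using forward_solution[OF \<open>0 < x1\<close> v P_below] by blast
  obtain yl where yl0: "yl x1 = v" and yl_pos: "\<And>x. x \<in> {x0..x1} \<Longrightarrow> 0 < yl x"
    and yl: "\<And>x. x \<in> {x0..x1} \<Longrightarrow> (yl has_real_derivative ode_rhs s P x (yl x)) (at x within {x0..x1})"
    using backward_solution[OF x0_pos x1 v] by blast
  define h where "h x = (if x \<le> x1 then yl x else yr x)" for x
  have h_left: "h x = yl x" if "x \<le> x1" for x using that by (simp add: h_def)
  have h_right: "h x = yr x" if "x1 \<le> x" for x using that yl0 yr0 by (auto simp: h_def)
  have hl: "(h has_real_derivative ode_rhs s P x (h x)) (at x within {x0..x1})" if "x \<in> {x0..x1}" for x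
  proof -
    have "(h has_real_derivative ode_rhs s P x (yl x)) (at x within {x0..x1})"
      by (rule has_field_derivative_transform_within[OF yl[OF that], where d=1])
         (use that in \<open>auto simp: h_left\<close>)
    then show ?thesis using that by (simp add: h_left)
  qed
  have hr: "(h has_real_derivative ode_rhs s P x (h x)) (at x within {x1..})" if "x1 \<le> x" for x
  proof -
    have "(h has_real_derivative ode_rhs s P x (yr x)) (at x within {x1..})"
      by (rule has_field_derivative_transform_within[OF yr[OF that], where d=1])
         (use that in \<open>auto simp: h_right\<close>)
    then show ?thesis using that by (simp add: h_right)
  qed
  have "(h has_real_derivative ode_rhs s P x (h x)) (at x within {x0..})" if x: "x0 \<le> x" for x
  proof (cases x x1 rule: linorder_cases)
    case less
    then show ?thesis using hl[of x] x at_within_atLeastAtMost_eq_atLeast[OF less] by simp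
  next
    case equal
    have split: "{x0..} = {x0..x1} \<union> {x1..}" using x1 by auto
    show ?thesis
      using hl[of x] hr[of x] equal x1 unfolding split has_field_derivative_iff Lim_within_Un by simp
  next
    case greater
    then show ?thesis
      using hr[of x] at_within_atLeast_eq_at[OF greater] at_within_atLeast_eq_at[of x0 x] x1 by simp
  qed
  moreover have "0 < h x" if "x0 \<le> x" for x
    using yl_pos[of x] yr_ge[of x] v that by (auto simp: h_def)
  ultimately have "global_sol s P x0 h" unfolding global_sol_def by blast
  moreover have "h x1 = v" using yl0 by (simp add: h_def)
  ultimately show thesis by (rule that)
qed

subsection \<open>The separatrix\<close>

lemma separatrix_le_Sup_gamma_c:
  assumes sep: "separatrix s P x0 g" and x1: "x0 \<le> x1"
  shows "ereal (g x1) \<le> (SUP y\<in>{0..}. ereal (gamma_c P y))"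
proof (rule ccontr)
  let ?l = "SUP y\<in>{0..}. ereal (gamma_c P y)"
  assume "\<not> ereal (g x1) \<le> ?l"
  moreover have "ereal 0 \<le> ?l" using P_zero by (intro SUP_upper2[of 0]) (auto simp: gamma_c_def)
  ultimately obtain L where L: "?l = ereal L" "L < g x1" by (cases ?l) auto
  define v where "v = (L + g x1) / 2"
  have v: "L < v" "v < g x1" using L by (auto simp: v_def)
  have "0 \<le> L" using L \<open>ereal 0 \<le> ?l\<close> by simp
  then have "0 < v" using v by simp
  have "P y < v + v^2" if "x1 \<le> y" for y
  proof -
    have "ereal (gamma_c P y) \<le> ?l" using that x1 x0_pos by (intro SUP_upper) auto
    then have "gamma_c P y < v" using L v by simp
    then show ?thesis using gamma_c_less_iff[of v y] \<open>0 < v\<close> by simp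
  qed
  then obtain h where h: "global_sol s P x0 h" "h x1 = v"
    using global_sol_through[OF x1 \<open>0 < v\<close>] by blast
  have "g x1 \<le> h x1"
    using sep h(1) x1 unfolding separatrix_def by (blast intro: global_sol_mono)
  then show False using h(2) v by simp
qed

lemma global_sol_growth_above:
  assumes g: "global_sol s P x0 g" and h: "global_sol s P x0 h" and less: "h x0 < g x0"
  shows "\<exists>C1 C2. 0 < C1 \<and> C1 < C2 \<and>
           (\<forall>\<^sub>F x in at_top. C1 * x powr (1/s) \<le> g x \<and> g x \<le> C2 * x powr (1/s))"
proof (intro exI conjI)
  define C1 where "C1 = (g x0 - h x0) / x0 powr (1/s)"
  define C2 where "C2 = max (2 * C1) ((1 + g x0) / x0 powr (1/s))"
  show "0 < C1" using less x0_pos by (simp add: C1_def)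
  then show "C1 < C2" by (simp add: C2_def)
  show "\<forall>\<^sub>F x in at_top. C1 * x powr (1/s) \<le> g x \<and> g x \<le> C2 * x powr (1/s)"
    unfolding eventually_at_top_linorder
  proof (intro exI allI impI conjI)
    fix x assume x: "x0 \<le> x"
    have "C1 * x powr (1/s) = (g x0 - h x0) * (x / x0) powr (1/s)"
      using x x0_pos by (simp add: C1_def powr_divide)
    also have "\<dots> \<le> g x - h x" using global_sol_diff_growth[OF g h _ x] less by simp
    also have "\<dots> \<le> g x" using global_sol_pos[OF h x] by simp
    finally show "C1 * x powr (1/s) \<le> g x" .
    have "g x \<le> (1 + g x0) / x0 powr (1/s) * x powr (1/s)" by (rule global_sol_le_powr[OF g x])
    also have "\<dots> \<le> C2 * x powr (1/s)" by (intro mult_right_mono) (auto simp: C2_def)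
    finally show "g x \<le> C2 * x powr (1/s)" .
  qed
qed

lemma bounded_separatrix:
  assumes sep: "separatrix s P x0 g" and P_bounded: "(SUP y\<in>{0..}. ereal (P y)) < \<infinity>"
  shows "bounded (g ` {x0..})"
proof -
  have "ereal 0 \<le> (SUP y\<in>{0..}. ereal (P y))" using P_zero by (intro SUP_upper2[of 0]) auto
  with P_bounded obtain B where B: "(SUP y\<in>{0..}. ereal (P y)) = ereal B"
    by (cases "SUP y\<in>{0..}. ereal (P y)") auto
  have "(SUP y\<in>{0..}. ereal (gamma_c P y)) \<le> (SUP y\<in>{0..}. ereal (P y))"
    using gamma_c_le_P by (intro SUP_mono) auto
  then have sup: "(SUP y\<in>{0..}. ereal (gamma_c P y)) \<le> ereal B" using B by simp
  have "g x \<le> B" if "x0 \<le> x" for x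
  proof -
    have "ereal (g x) \<le> ereal B" using separatrix_le_Sup_gamma_c[OF sep that] sup by (rule order_trans)
    then show ?thesis by simp
  qed
  moreover have "0 < g x" if "x0 \<le> x" for x
    using sep that unfolding separatrix_def by (blast intro: global_sol_pos)
  ultimately show ?thesis unfolding bounded_iff by (intro exI[of _ B]) force
qed

lemma bounded_global_sol_eq_separatrix:
  assumes sep: "separatrix s P x0 gstar" and g: "global_sol s P x0 g"
    and g_bounded: "bounded (g ` {x0..})" and x: "x0 \<le> x"
  shows "g x = gstar x"
proof -
  have gstar: "global_sol s P x0 gstar" and "gstar x0 \<le> g x0"
    using sep g unfolding separatrix_def by auto
  moreover have "\<not> gstar x0 < g x0"
  proof
    assume less: "gstar x0 < g x0"
    obtain B where "\<forall>y\<in>g ` {x0..}. norm y \<le> B"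
      using g_bounded unfolding bounded_iff by blast
    then have B: "\<And>x. x0 \<le> x \<Longrightarrow> g x \<le> B" by force
    define c where "c = g x0 - gstar x0"
    have c: "0 < c" "0 \<le> B" using less B[of x0] global_sol_pos[OF g, of x0] by (auto simp: c_def)
    define z where "z = x0 * max 1 (((B + 1) / c) powr s)"
    have z: "x0 \<le> z" using x0_pos by (simp add: z_def)
    have "B + 1 = c * (((B + 1) / c) powr s) powr (1/s)"
      using c s_pos by (simp add: powr_powr)
    also have "\<dots> \<le> c * (z / x0) powr (1/s)"
      using c x0_pos s_pos by (intro mult_left_mono powr_mono2) (auto simp: z_def)
    also have "\<dots> \<le> g z - gstar z"
      unfolding c_def using global_sol_diff_growth[OF g gstar _ z] less by simp
    also have "\<dots> < g z" using global_sol_pos[OF gstar z] by simp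
    finally show False using B[OF z] by simp
  qed
  ultimately show ?thesis using global_sol_unique[OF g gstar _ x] by simp
qed

end

lemma C2_on_nonneg_imp_continuous_on: "C2_on_nonneg P \<Longrightarrow> continuous_on {0..} P"
  unfolding C2_on_nonneg_def continuous_on_eq_continuous_within
  using DERIV_continuous by fastforce

lemma Lim_at_top_mono_ereal:
  fixes f :: "real \<Rightarrow> real"
  assumes mono: "\<And>x y. 0 \<le> x \<Longrightarrow> x \<le> y \<Longrightarrow> f x \<le> f y"
  shows "Lim at_top (\<lambda>y. ereal (f y)) = (SUP y\<in>{0..}. ereal (f y))"
proof (rule tendsto_Lim)
  show "((\<lambda>y. ereal (f y)) \<longlongrightarrow> (SUP y\<in>{0..}. ereal (f y))) at_top"
  proof (rule increasing_tendsto)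
    show "\<forall>\<^sub>F y in at_top. ereal (f y) \<le> (SUP y\<in>{0..}. ereal (f y))"
      using eventually_ge_at_top[of 0] by eventually_elim (auto intro: SUP_upper)
    fix l assume "l < (SUP y\<in>{0..}. ereal (f y))"
    then obtain y0 where y0: "0 \<le> y0" "l < ereal (f y0)" by (auto simp: less_SUP_iff)
    show "\<forall>\<^sub>F y in at_top. l < ereal (f y)"
      using eventually_ge_at_top[of y0]
      by eventually_elim (use y0 mono in \<open>auto intro: less_le_trans\<close>)
  qed
qed simp

theorem corollary1:
  fixes s x0 :: real and P gstar :: "real \<Rightarrow> real"
  assumes s_pos: "s > 0" and x0_pos: "x0 > 0"
    and P_C2: "C2_on_nonneg P"
    and P_incr: "strict_mono_on {0..} P"
    and P0: "P 0 = 0" and P_pos: "\<forall>x>0. P x > 0"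
    and P_int: "(\<lambda>z. P z * z powr (-1 - 2 / s)) integrable_on {x0..}"
    and sep: "separatrix s P x0 gstar"
  shows "(\<forall>g. global_sol s P x0 g \<and> g x0 > gstar x0 \<longrightarrow>
            (\<exists>C1 C2. 0 < C1 \<and> C1 < C2 \<and>
               (\<forall>\<^sub>F x in at_top. C1 * x powr (1 / s) \<le> g x \<and> g x \<le> C2 * x powr (1 / s))))
       \<and> (\<exists>C>0. \<forall>x\<ge>x0. gamma_c P x < gstar x \<and>
            ereal (gstar x) \<le> min (Lim at_top (\<lambda>y. ereal (gamma_c P y)))
                                   (ereal (C * x powr (1 / s))))
       \<and> (Lim at_top (\<lambda>x. ereal (P x)) < \<infinity> \<longrightarrow>
            bounded (gstar ` {x0..}) \<and>
            (\<forall>g. global_sol s P x0 g \<and> bounded (g ` {x0..}) \<longrightarrow> (\<forall>x\<ge>x0. g x = gstar x)))"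
  \<comment> \<open>\<open>P_pos\<close> follows from \<open>P_incr\<close> and \<open>P0\<close>\<close>
proof -
  interpret separatrix_ode s x0 P
    using s_pos x0_pos C2_on_nonneg_imp_continuous_on[OF P_C2] P_incr P0 by unfold_locales
  have gstar: "global_sol s P x0 gstar" using sep by (simp add: separatrix_def)
  have Lim_gamma_c: "Lim at_top (\<lambda>y. ereal (gamma_c P y)) = (SUP y\<in>{0..}. ereal (gamma_c P y))"
    by (rule Lim_at_top_mono_ereal[OF gamma_c_mono])
  have Lim_P: "Lim at_top (\<lambda>y. ereal (P y)) = (SUP y\<in>{0..}. ereal (P y))"
    by (rule Lim_at_top_mono_ereal[OF P_mono])
  define C where "C = (1 + gstar x0) / x0 powr (1/s)"
  have "0 < C" using global_sol_pos[OF gstar, of x0] x0_pos by (simp add: C_def)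
  moreover have "gamma_c P x < gstar x \<and>
                 ereal (gstar x) \<le> min (Lim at_top (\<lambda>y. ereal (gamma_c P y))) (ereal (C * x powr (1/s)))"
    if "x0 \<le> x" for x
    using gamma_c_less_global_sol[OF gstar that] separatrix_le_Sup_gamma_c[OF sep that]
      global_sol_le_powr[OF gstar that] Lim_gamma_c
    by (simp add: C_def)
  ultimately show ?thesis
    using global_sol_growth_above[OF _ gstar] bounded_separatrix[OF sep]
      bounded_global_sol_eq_separatrix[OF sep] Lim_P
    by auto
qed

end
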